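(* Let $r \in \mathbb{T}$ (the unit circle) and let $\varphi_r:\mathbb{D}\to\mathbb{D}$ be given by $\varphi_r(z)=rz$. Let $C_{\varphi_r}f = f\circ\varphi_r$. Then: (1) $\sigma_{pt}(C_{\varphi_r}, H(\mathbb{D})) = \{ r^n : n=0,1,2,\dots\}$. (2) $\sigma^*(C_{\varphi_r}, H(\mathbb{D})) \subseteq \mathbb{T}$, and also $\sigma^*(C_{\varphi_r}, H_0(\mathbb{D})) \subseteq \mathbb{T}$. (3) If $r$ is a root of unity and $m$ is the least positive integer with $r^m=1$, then $\sigma(C_{\varphi_r}, H(\mathbb{D})) = \sigma^*(C_{\varphi_r}, H(\mathbb{D})) = \sigma_{pt}(C_{\varphi_r}, H(\mathbb{D})) = \{1,r,r^2,\dots,r^{m-1}\}$, and $\ker(C_{\varphi_r}-r^jI)$ is infinite dimensional for each $j=0,\dots,m-1$. The same statements hold with $H_0(\mathbb{D})$ in place of $H(\mathbb{D})$. (4) If $r$ is not a root of unity, then $\sigma_{pt}(C_{\varphi_r}, H_0(\mathbb{D})) = \{ r^n : n=1,2,\dots\}$ and $\overline{\sigma(C_{\varphi_r}, H_0(\mathbb{D}))} = \sigma^*(C_{\varphi_r}, H_0(\mathbb{D})) = \mathbb{T}$; moreover $\sigma^*(C_{\varphi_r}, H(\mathbb{D})) = \mathbb{T}$.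
   Context: $\mathbb{D}$ is the open unit disc and $\mathbb{T}$ the unit circle. $H(\mathbb{D})$ is the space of all analytic functions on $\mathbb{D}$ with the Fréchet topology of uniform convergence on compact subsets; $H_0(\mathbb{D})=\{f\in H(\mathbb{D}): f(0)=0\}$ with the induced topology (it is invariant under $C_{\varphi_r}$). For a continuous linear operator $T$ on a Fréchet space $X$: the resolvent set $\rho(T;X)$ is the set of $\lambda\in\mathbb{C}$ such that $\lambda I - T$ is bijective with continuous inverse $R(\lambda,T)=(\lambda I-T)^{-1}$; the spectrum is $\sigma(T;X)=\mathbb{C}\setminus\rho(T;X)$; the point spectrum $\sigma_{pt}(T;X)$ is the set of $\lambda$ with $\lambda I-T$ not injective. $\rho^*(T;X)$ is the set of $\lambda\in\mathbb{C}$ for which there is $\delta>0$ with $\{z:|z-\lambda|<\delta\}\subseteq\rho(T;X)$ and $\{R(\mu,T): |\mu-\lambda|<\delta\}$ equicontinuous; the Waelbroeck spectrum is $\sigma^*(T;X)=\mathbb{C}\setminus\rho^*(T;X)$. *)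

theory Defs
  imports "HOL-Analysis.Analysis"
begin

text \<open>Elements of H(D) are represented by functions complex => complex that are
holomorphic on the open unit disc and (as a normalisation making the representation
unique) vanish outside the disc.\<close>

definition hol_disc :: "(complex \<Rightarrow> complex) set" where
  "hol_disc = {f. f holomorphic_on ball 0 1 \<and> (\<forall>z. z \<notin> ball 0 1 \<longrightarrow> f z = 0)}"

definition hol0_disc :: "(complex \<Rightarrow> complex) set" where
  "hol0_disc = {f \<in> hol_disc. f 0 = 0}"

definition comp_rot :: "complex \<Rightarrow> (complex \<Rightarrow> complex) \<Rightarrow> (complex \<Rightarrow> complex)" where
  "comp_rot r f = (\<lambda>z. if z \<in> ball 0 1 then f (r * z) else 0)"

text \<open>Fundamental system of seminorms for the topology of uniform convergence on
compact subsets of the disc: sup over the closed discs of radius rho < 1.\<close>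
definition sup_on :: "real \<Rightarrow> (complex \<Rightarrow> complex) \<Rightarrow> real" where
  "sup_on \<rho> f = (SUP z\<in>cball 0 \<rho>. norm (f z))"

definition cont_op :: "(complex \<Rightarrow> complex) set \<Rightarrow> ((complex \<Rightarrow> complex) \<Rightarrow> (complex \<Rightarrow> complex)) \<Rightarrow> bool" where
  "cont_op X T \<longleftrightarrow> (\<forall>\<rho>\<in>{0<..<1}. \<exists>\<rho>'\<in>{0<..<1}. \<exists>C. \<forall>f\<in>X. sup_on \<rho> (T f) \<le> C * sup_on \<rho>' f)"

definition equicont_ops :: "(complex \<Rightarrow> complex) set \<Rightarrow> ((complex \<Rightarrow> complex) \<Rightarrow> (complex \<Rightarrow> complex)) set \<Rightarrow> bool" where
  "equicont_ops X Ts \<longleftrightarrow> (\<forall>\<rho>\<in>{0<..<1}. \<exists>\<rho>'\<in>{0<..<1}. \<exists>C. \<forall>T\<in>Ts. \<forall>f\<in>X. sup_on \<rho> (T f) \<le> C * sup_on \<rho>' f)"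

definition shift_op :: "complex \<Rightarrow> ((complex \<Rightarrow> complex) \<Rightarrow> (complex \<Rightarrow> complex)) \<Rightarrow> (complex \<Rightarrow> complex) \<Rightarrow> (complex \<Rightarrow> complex)" where
  "shift_op l T f = (\<lambda>z. l * f z - T f z)"

definition resolvent_op where
  "resolvent_op X T l = inv_into X (shift_op l T)"

definition resolvent_set :: "(complex \<Rightarrow> complex) set \<Rightarrow> ((complex \<Rightarrow> complex) \<Rightarrow> (complex \<Rightarrow> complex)) \<Rightarrow> complex set" where
  "resolvent_set X T = {l. bij_betw (shift_op l T) X X \<and> cont_op X (resolvent_op X T l)}"

definition spec :: "(complex \<Rightarrow> complex) set \<Rightarrow> ((complex \<Rightarrow> complex) \<Rightarrow> (complex \<Rightarrow> complex)) \<Rightarrow> complex set" where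
  "spec X T = UNIV - resolvent_set X T"

definition point_spec :: "(complex \<Rightarrow> complex) set \<Rightarrow> ((complex \<Rightarrow> complex) \<Rightarrow> (complex \<Rightarrow> complex)) \<Rightarrow> complex set" where
  "point_spec X T = {l. \<not> inj_on (shift_op l T) X}"

definition resolvent_star :: "(complex \<Rightarrow> complex) set \<Rightarrow> ((complex \<Rightarrow> complex) \<Rightarrow> (complex \<Rightarrow> complex)) \<Rightarrow> complex set" where
  "resolvent_star X T = {l. \<exists>\<delta>>0. ball l \<delta> \<subseteq> resolvent_set X T \<and>
      equicont_ops X (resolvent_op X T ` ball l \<delta>)}"

definition waelbroeck_spec :: "(complex \<Rightarrow> complex) set \<Rightarrow> ((complex \<Rightarrow> complex) \<Rightarrow> (complex \<Rightarrow> complex)) \<Rightarrow> complex set" where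
  "waelbroeck_spec X T = UNIV - resolvent_star X T"

definition kernel_of :: "(complex \<Rightarrow> complex) set \<Rightarrow> ((complex \<Rightarrow> complex) \<Rightarrow> (complex \<Rightarrow> complex)) \<Rightarrow> (complex \<Rightarrow> complex) set" where
  "kernel_of X S = {f \<in> X. S f = (\<lambda>z. 0)}"

definition infinite_dimensional :: "(complex \<Rightarrow> complex) set \<Rightarrow> bool" where
  "infinite_dimensional K \<longleftrightarrow> (\<forall>n. \<exists>fs :: nat \<Rightarrow> complex \<Rightarrow> complex.
      (\<forall>i<n. fs i \<in> K) \<and>
      (\<forall>c :: nat \<Rightarrow> complex. (\<lambda>z. \<Sum>i<n. c i * fs i z) = (\<lambda>z. 0) \<longrightarrow> (\<forall>i<n. c i = 0)))"

end

theory Submission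
  imports Defs "HOL-Complex_Analysis.Cauchy_Integral_Formula" "HOL-Computational_Algebra.Polynomial"
begin

text \<open>
  Comparing Taylor coefficients at 0 in f (r z) = l f z shows that every eigenvalue of C_r is a
  power r^n, and z^n is an eigenfunction for r^n (lying in H_0 when n >= 1). Off these values
  l I - C_r is inverted explicitly, with every seminorm sup_{|z| <= rho} |h z| of the solution
  bounded by a constant times that of the right-hand side: by a Neumann series when |l| <> 1,
  and by a finite geometric sum in C_r when r^m = 1 <> l^m. The constants depend continuously on
  l, so the resolvents are equicontinuous near l and l lies outside the Waelbroeck spectrum. Thus
  the Waelbroeck spectrum lies in the unit circle, and in {l. l^m = 1} = {1, r, ..., r^(m-1)} if
  r is a primitive m-th root of unity; this set is already contained in the point spectrum. If r
  is not a root of unity, its powers are dense in the circle by Kronecker's theorem, so the circle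
  lies in the closure of the point spectrum, hence in the (closed) Waelbroeck spectrum.
\<close>

lemma hol_discI:
  assumes "f holomorphic_on ball 0 1" and "\<And>z. z \<notin> ball 0 1 \<Longrightarrow> f z = 0"
  shows "f \<in> hol_disc"
  using assms by (simp add: hol_disc_def)

lemma hol_discD:
  assumes "f \<in> hol_disc"
  shows "f holomorphic_on ball 0 1" and "z \<notin> ball 0 1 \<Longrightarrow> f z = 0"
  using assms by (simp_all add: hol_disc_def)

lemma hol0_disc_subset: "hol0_disc \<subseteq> hol_disc"
  by (auto simp: hol0_disc_def)

lemma restrict_disc_in_hol_disc:
  assumes "f holomorphic_on ball 0 1"
  shows "(\<lambda>z. if z \<in> ball 0 1 then f z else 0) \<in> hol_disc"
proof (rule hol_discI)
  show "(\<lambda>z. if z \<in> ball 0 1 then f z else 0) holomorphic_on ball 0 1"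
    using assms by (rule holomorphic_transform) simp
qed simp

lemma diff_in_hol_discs:
  assumes "X \<in> {hol_disc, hol0_disc}" and "f \<in> X" and "g \<in> X"
  shows "(\<lambda>z. f z - g z) \<in> X"
  using assms by (auto simp: hol0_disc_def hol_disc_def intro: holomorphic_intros)

lemma mult_in_cball:
  fixes s z :: complex
  assumes "norm s \<le> 1" and "z \<in> cball 0 \<rho>"
  shows "s * z \<in> cball 0 \<rho>"
  using assms mult_left_le_one_le[of "norm z" "norm s"] by (simp add: norm_mult)

lemma mult_in_ball:
  fixes s z :: complex
  assumes "norm s \<le> 1" and "z \<in> ball 0 1"
  shows "s * z \<in> ball 0 1"
  using assms mult_left_le_one_le[of "norm z" "norm s"] by (simp add: norm_mult)

lemma holomorphic_on_rotate:
  assumes "norm s \<le> 1" and "f holomorphic_on ball 0 1"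
  shows "(\<lambda>z. f (s * z)) holomorphic_on ball 0 1"
proof -
  have "(*) s ` ball 0 1 \<subseteq> ball 0 1"
    using mult_in_ball[OF assms(1)] by auto
  then show ?thesis
    using holomorphic_on_compose_gen[of "(*) s" "ball 0 1" f "ball 0 1"] assms(2)
    by (auto simp: o_def intro: holomorphic_intros)
qed

lemma comp_rot_in_hol_disc:
  assumes "norm r \<le> 1" and "f \<in> hol_disc"
  shows "comp_rot r f \<in> hol_disc"
  unfolding comp_rot_def using assms
  by (intro restrict_disc_in_hol_disc holomorphic_on_rotate hol_discD)

lemma shift_op_comp_rot_in:
  assumes X: "X \<in> {hol_disc, hol0_disc}" and r: "norm r \<le> 1" and f: "f \<in> X"
  shows "shift_op l (comp_rot r) f \<in> X"
proof -
  have "f \<in> hol_disc"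
    using X f hol0_disc_subset by auto
  then have "shift_op l (comp_rot r) f \<in> hol_disc"
    using comp_rot_in_hol_disc[OF r]
    by (auto simp: hol_disc_def shift_op_def intro!: holomorphic_intros)
  then show ?thesis
    using X f by (auto simp: hol0_disc_def shift_op_def comp_rot_def)
qed

lemma shift_op_comp_rot_eq_0_iff:
  assumes "f \<in> hol_disc"
  shows "shift_op l (comp_rot r) f = (\<lambda>z. 0) \<longleftrightarrow> (\<forall>z\<in>ball 0 1. f (r * z) = l * f z)"
  using hol_discD(2)[OF assms] by (auto simp: shift_op_def comp_rot_def fun_eq_iff)

section \<open>Point spectrum\<close>

lemma not_inj_on_iff_nontrivial_kernel:
  fixes S :: "('a \<Rightarrow> 'b::ab_group_add) \<Rightarrow> ('a \<Rightarrow> 'b)"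
  assumes diff: "\<And>f g. f \<in> X \<Longrightarrow> g \<in> X \<Longrightarrow> (\<lambda>z. f z - g z) \<in> X"
    and zero: "(\<lambda>z. 0) \<in> X"
    and additive: "\<And>f g. S (\<lambda>z. f z - g z) = (\<lambda>z. S f z - S g z)"
  shows "\<not> inj_on S X \<longleftrightarrow> (\<exists>f\<in>X. f \<noteq> (\<lambda>z. 0) \<and> S f = (\<lambda>z. 0))"
proof
  assume "\<not> inj_on S X"
  then obtain f g where "f \<in> X" "g \<in> X" "f \<noteq> g" "S f = S g"
    by (auto simp: inj_on_def)
  then show "\<exists>f\<in>X. f \<noteq> (\<lambda>z. 0) \<and> S f = (\<lambda>z. 0)"
    using diff additive[of f g] by (intro bexI[of _ "\<lambda>z. f z - g z"]) (auto simp: fun_eq_iff)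
next
  assume "\<exists>f\<in>X. f \<noteq> (\<lambda>z. 0) \<and> S f = (\<lambda>z. 0)"
  then obtain f where "f \<in> X" "f \<noteq> (\<lambda>z. 0)" "S f = (\<lambda>z. 0)"
    by blast
  moreover have "S (\<lambda>z. 0) = (\<lambda>z. 0)"
    using additive[of "\<lambda>z. 0" "\<lambda>z. 0"] by simp
  ultimately show "\<not> inj_on S X"
    using zero inj_onD[of S X f "\<lambda>z. 0"] by auto
qed

lemma point_spec_comp_rot_iff:
  assumes X: "X \<in> {hol_disc, hol0_disc}"
  shows "l \<in> point_spec X (comp_rot r) \<longleftrightarrow>
    (\<exists>f\<in>X. f \<noteq> (\<lambda>z. 0) \<and> (\<forall>z\<in>ball 0 1. f (r * z) = l * f z))"
proof -
  have "\<not> inj_on (shift_op l (comp_rot r)) X \<longleftrightarrow>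
      (\<exists>f\<in>X. f \<noteq> (\<lambda>z. 0) \<and> shift_op l (comp_rot r) f = (\<lambda>z. 0))"
  proof (rule not_inj_on_iff_nontrivial_kernel)
    show "(\<lambda>z. 0) \<in> X"
      using X by (auto simp: hol0_disc_def hol_disc_def)
  qed (use X diff_in_hol_discs in \<open>auto simp: shift_op_def comp_rot_def algebra_simps\<close>)
  moreover have "shift_op l (comp_rot r) f = (\<lambda>z. 0) \<longleftrightarrow> (\<forall>z\<in>ball 0 1. f (r * z) = l * f z)"
    if "f \<in> X" for f
    using X that hol0_disc_subset shift_op_comp_rot_eq_0_iff by blast
  ultimately show ?thesis
    by (auto simp: point_spec_def)
qed

lemma rotation_eigenvalue:
  assumes f: "f holomorphic_on ball 0 1" and r: "norm r \<le> 1"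
    and eigen: "\<And>z. z \<in> ball 0 1 \<Longrightarrow> f (r * z) = l * f z"
    and n: "(deriv ^^ n) f 0 \<noteq> 0"
  shows "l = r ^ n"
proof -
  have "r ^ n * (deriv ^^ n) f 0 = (deriv ^^ n) (\<lambda>z. f (r * z)) 0"
    using higher_deriv_compose_linear[of f "ball 0 1" "ball 0 1" 0 r n] f mult_in_ball[OF r] by simp
  also have "\<dots> = (deriv ^^ n) (\<lambda>z. l * f z) 0"
    by (rule higher_deriv_transform_within_open[OF holomorphic_on_rotate[OF r f] _ open_ball])
      (auto intro: holomorphic_intros f eigen)
  also have "\<dots> = l * (deriv ^^ n) f 0"
    by (rule higher_deriv_cmult[OF f]) auto
  finally show ?thesis
    using n by simp
qed

lemma eigenvalue_of_comp_rot:
  assumes r: "norm r \<le> 1" and f: "f \<in> hol_disc" "f \<noteq> (\<lambda>z. 0)"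
    and eigen: "\<forall>z\<in>ball 0 1. f (r * z) = l * f z"
  obtains n where "l = r ^ n" and "f 0 = 0 \<Longrightarrow> n \<ge> 1"
proof -
  obtain w where "f w \<noteq> 0"
    using f(2) by auto
  moreover have "w \<in> ball 0 1" if "f w \<noteq> 0" for w
    using hol_discD(2)[OF f(1)] that by blast
  ultimately obtain n where n: "(deriv ^^ n) f 0 \<noteq> 0"
    using holomorphic_fun_eq_0_on_ball[OF hol_discD(1)[OF f(1)]] by blast
  show thesis
  proof
    show "l = r ^ n"
      using rotation_eigenvalue[OF hol_discD(1)[OF f(1)] r _ n] eigen by blast
    show "n \<ge> 1" if "f 0 = 0"
      using n that by (cases n) auto
  qed
qed

definition disc_monomial :: "nat \<Rightarrow> complex \<Rightarrow> complex" where
  "disc_monomial n = (\<lambda>z. if z \<in> ball 0 1 then z ^ n else 0)"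

lemma disc_monomial_in_hol_disc: "disc_monomial n \<in> hol_disc"
  unfolding disc_monomial_def by (intro restrict_disc_in_hol_disc holomorphic_intros)

lemma disc_monomial_in_hol0_disc: "n \<ge> 1 \<Longrightarrow> disc_monomial n \<in> hol0_disc"
  using disc_monomial_in_hol_disc by (simp add: hol0_disc_def disc_monomial_def)

lemma disc_monomial_nonzero: "disc_monomial n \<noteq> (\<lambda>z. 0)"
proof
  assume "disc_monomial n = (\<lambda>z. 0)"
  from fun_cong[OF this, of "1/2"] show False
    by (simp add: disc_monomial_def)
qed

lemma disc_monomial_rotate:
  assumes "norm r \<le> 1" and "z \<in> ball 0 1"
  shows "disc_monomial n (r * z) = r ^ n * disc_monomial n z"
  using assms mult_in_ball by (simp add: disc_monomial_def power_mult_distrib)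

lemma point_spec_hol_disc:
  assumes r: "norm r \<le> 1"
  shows "point_spec hol_disc (comp_rot r) = {r ^ n | n. True}"
proof (intro antisym subsetI)
  fix l assume "l \<in> point_spec hol_disc (comp_rot r)"
  then obtain f where "f \<in> hol_disc" "f \<noteq> (\<lambda>z. 0)" "\<forall>z\<in>ball 0 1. f (r * z) = l * f z"
    using point_spec_comp_rot_iff[of hol_disc] by auto
  then obtain n where "l = r ^ n"
    by (rule eigenvalue_of_comp_rot[OF r])
  then show "l \<in> {r ^ n | n. True}"
    by blast
next
  fix l assume "l \<in> {r ^ n | n. True}"
  then obtain n where "l = r ^ n" "True"
    by blast
  then show "l \<in> point_spec hol_disc (comp_rot r)"
    unfolding point_spec_comp_rot_iff[of hol_disc, simplified]
    using disc_monomial_in_hol_disc disc_monomial_nonzero disc_monomial_rotate[OF r]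
    by (intro bexI[of _ "disc_monomial n"]) auto
qed

lemma point_spec_hol0_disc:
  assumes r: "norm r \<le> 1"
  shows "point_spec hol0_disc (comp_rot r) = {r ^ n | n. n \<ge> 1}"
proof (intro antisym subsetI)
  fix l assume "l \<in> point_spec hol0_disc (comp_rot r)"
  then obtain f where "f \<in> hol_disc" "f 0 = 0" "f \<noteq> (\<lambda>z. 0)" "\<forall>z\<in>ball 0 1. f (r * z) = l * f z"
    using point_spec_comp_rot_iff[of hol0_disc] by (auto simp: hol0_disc_def)
  then obtain n where "l = r ^ n" "n \<ge> 1"
    using eigenvalue_of_comp_rot[OF r] by metis
  then show "l \<in> {r ^ n | n. n \<ge> 1}"
    by blast
next
  fix l assume "l \<in> {r ^ n | n. n \<ge> 1}"
  then obtain n where "l = r ^ n" "n \<ge> 1"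
    by blast
  then show "l \<in> point_spec hol0_disc (comp_rot r)"
    unfolding point_spec_comp_rot_iff[of hol0_disc, simplified]
    using disc_monomial_in_hol0_disc disc_monomial_nonzero disc_monomial_rotate[OF r]
    by (intro bexI[of _ "disc_monomial n"]) auto
qed

lemma inj_on_shift_op_comp_rot:
  assumes X: "X \<in> {hol_disc, hol0_disc}" and r: "norm r \<le> 1" and l: "l \<notin> {r ^ n | n. True}"
  shows "inj_on (shift_op l (comp_rot r)) X"
proof (rule ccontr)
  assume "\<not> inj_on (shift_op l (comp_rot r)) X"
  then have "l \<in> point_spec X (comp_rot r)"
    by (simp add: point_spec_def)
  then have "l \<in> point_spec hol_disc (comp_rot r)"
    using X hol0_disc_subset by (auto simp: point_spec_comp_rot_iff)
  then show False
    using l point_spec_hol_disc[OF r] by blast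
qed

section \<open>Spectrum and Waelbroeck spectrum\<close>

lemma point_spec_subset_spec: "point_spec X T \<subseteq> spec X T"
  by (auto simp: point_spec_def spec_def resolvent_set_def bij_betw_def)

lemma spec_subset_waelbroeck_spec: "spec X T \<subseteq> waelbroeck_spec X T"
  unfolding spec_def waelbroeck_spec_def resolvent_star_def using centre_in_ball by blast

lemma open_resolvent_star: "open (resolvent_star X T)"
proof (rule openI)
  fix l assume "l \<in> resolvent_star X T"
  then obtain \<delta> where \<delta>: "\<delta> > 0" "ball l \<delta> \<subseteq> resolvent_set X T"
    and equi: "equicont_ops X (resolvent_op X T ` ball l \<delta>)"
    unfolding resolvent_star_def by blast
  have "l' \<in> resolvent_star X T" if "l' \<in> ball l \<delta>" for l'
  proof -
    have sub: "ball l' (\<delta> - dist l l') \<subseteq> ball l \<delta>"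
    proof
      fix x assume "x \<in> ball l' (\<delta> - dist l l')"
      then show "x \<in> ball l \<delta>"
        using dist_triangle[of l x l'] by simp
    qed
    have "equicont_ops X (resolvent_op X T ` ball l' (\<delta> - dist l l'))"
      using equi sub unfolding equicont_ops_def by blast
    then show ?thesis
      using that sub \<delta>(2) unfolding resolvent_star_def by (intro CollectI exI[of _ "\<delta> - dist l l'"]) auto
  qed
  then show "\<exists>e>0. ball l e \<subseteq> resolvent_star X T"
    using \<delta>(1) by blast
qed

lemma closed_waelbroeck_spec: "closed (waelbroeck_spec X T)"
  using open_resolvent_star by (simp add: waelbroeck_spec_def closed_def Compl_eq_Diff_UNIV Diff_Diff_Int)

lemma closure_spec_subset_waelbroeck_spec: "closure (spec X T) \<subseteq> waelbroeck_spec X T"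
  by (rule closure_minimal[OF spec_subset_waelbroeck_spec closed_waelbroeck_spec])

lemma resolvent_starI:
  assumes "\<delta> > 0"
    and inj: "\<And>l'. l' \<in> ball l \<delta> \<Longrightarrow> inj_on (shift_op l' T) X"
    and maps: "\<And>l'. shift_op l' T ` X \<subseteq> X"
    and solve: "\<And>l' g. l' \<in> ball l \<delta> \<Longrightarrow> g \<in> X \<Longrightarrow>
       \<exists>h\<in>X. shift_op l' T h = g \<and> (\<forall>\<rho>\<in>{0<..<1}. sup_on \<rho> h \<le> K * sup_on \<rho> g)"
  shows "l \<in> resolvent_star X T"
proof -
  have bij: "bij_betw (shift_op l' T) X X" if "l' \<in> ball l \<delta>" for l'
    unfolding bij_betw_def using inj[OF that] maps solve[OF that] by blast
  have bound: "\<forall>\<rho>\<in>{0<..<1}. sup_on \<rho> (resolvent_op X T l' g) \<le> K * sup_on \<rho> g"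
    if l': "l' \<in> ball l \<delta>" and g: "g \<in> X" for l' g
  proof -
    obtain h where h: "h \<in> X" "shift_op l' T h = g" "\<forall>\<rho>\<in>{0<..<1}. sup_on \<rho> h \<le> K * sup_on \<rho> g"
      using solve[OF l' g] by blast
    have "resolvent_op X T l' g = h"
      unfolding resolvent_op_def h(2)[symmetric] by (rule inv_into_f_f[OF inj[OF l'] h(1)])
    then show ?thesis
      using h(3) by simp
  qed
  have "ball l \<delta> \<subseteq> resolvent_set X T"
    using bij bound unfolding resolvent_set_def cont_op_def by blast
  moreover have "equicont_ops X (resolvent_op X T ` ball l \<delta>)"
    using bound unfolding equicont_ops_def by blast
  ultimately show ?thesis
    unfolding resolvent_star_def using \<open>\<delta> > 0\<close> by blast
qed

section \<open>Bounded inverses of l I - C_r\<close>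

lemma sup_on_upper:
  assumes "f \<in> hol_disc" and "\<rho> < 1" and "z \<in> cball 0 \<rho>"
  shows "norm (f z) \<le> sup_on \<rho> f"
proof -
  have "continuous_on (cball 0 \<rho>) f"
    using assms(1,2) by (intro holomorphic_on_imp_continuous_on holomorphic_on_subset[OF hol_discD(1)]) auto
  then have "bounded ((\<lambda>z. norm (f z)) ` cball 0 \<rho>)"
    by (intro compact_imp_bounded compact_continuous_image continuous_intros) auto
  then show ?thesis
    unfolding sup_on_def using assms(3) by (intro cSUP_upper bounded_imp_bdd_above)
qed

lemma sup_on_least:
  assumes "\<rho> \<ge> 0" and "\<And>z. z \<in> cball 0 \<rho> \<Longrightarrow> norm (h z) \<le> B"
  shows "sup_on \<rho> h \<le> B"
  unfolding sup_on_def using assms by (intro cSUP_least) auto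

lemma sup_on_nonneg:
  assumes "f \<in> hol_disc" and "0 \<le> \<rho>" and "\<rho> < 1"
  shows "0 \<le> sup_on \<rho> f"
proof -
  have "norm (f 0) \<le> sup_on \<rho> f"
    using sup_on_upper[OF assms(1,3)] assms(2) by simp
  then show ?thesis
    by (rule order_trans[OF norm_ge_zero])
qed

definition bounded_solution ::
    "complex \<Rightarrow> complex \<Rightarrow> real \<Rightarrow> (complex \<Rightarrow> complex) \<Rightarrow> (complex \<Rightarrow> complex) \<Rightarrow> bool" where
  "bounded_solution r l K g h \<longleftrightarrow> h \<in> hol_disc \<and> (g 0 = 0 \<longrightarrow> h 0 = 0) \<and>
     (\<forall>z\<in>ball 0 1. l * h z - h (r * z) = g z) \<and>
     (\<forall>\<rho>\<in>{0..<1}. \<forall>z\<in>cball 0 \<rho>. norm (h z) \<le> K * sup_on \<rho> g)"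

lemma bounded_solution_mono:
  assumes "bounded_solution r l K g h" and "K \<le> K'" and "g \<in> hol_disc"
  shows "bounded_solution r l K' g h"
proof -
  have "K * sup_on \<rho> g \<le> K' * sup_on \<rho> g" if "\<rho> \<in> {0..<1}" for \<rho>
    using sup_on_nonneg[OF assms(3)] that assms(2) by (intro mult_right_mono) auto
  with assms(1) show ?thesis
    unfolding bounded_solution_def by (blast intro: order_trans)
qed

lemma bounded_solution_preimage:
  assumes X: "X \<in> {hol_disc, hol0_disc}" and g: "g \<in> X" and h: "bounded_solution r l K g h"
  shows "h \<in> X" and "shift_op l (comp_rot r) h = g"
    and "\<forall>\<rho>\<in>{0<..<1}. sup_on \<rho> h \<le> K * sup_on \<rho> g"
proof -
  have g_hol: "g \<in> hol_disc"
    using X g hol0_disc_subset by auto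
  show "h \<in> X"
    using X g h by (auto simp: bounded_solution_def hol0_disc_def)
  show "shift_op l (comp_rot r) h = g"
  proof
    fix z
    have "h \<in> hol_disc" "\<forall>z\<in>ball 0 1. l * h z - h (r * z) = g z"
      using h by (simp_all add: bounded_solution_def)
    then show "shift_op l (comp_rot r) h z = g z"
      using hol_discD(2)[OF g_hol, of z] hol_discD(2)[of h z]
      by (cases "z \<in> ball 0 1") (simp_all add: shift_op_def comp_rot_def)
  qed
  show "\<forall>\<rho>\<in>{0<..<1}. sup_on \<rho> h \<le> K * sup_on \<rho> g"
    using h by (auto intro: sup_on_least simp: bounded_solution_def)
qed

lemma resolvent_star_comp_rotI:
  assumes X: "X \<in> {hol_disc, hol0_disc}" and r: "norm r \<le> 1"
    and U: "open U" "l \<in> U" and K: "continuous_on U K"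
    and not_eigen: "\<And>l'. l' \<in> U \<Longrightarrow> l' \<notin> {r ^ n | n. True}"
    and solvable: "\<And>l' g. l' \<in> U \<Longrightarrow> g \<in> hol_disc \<Longrightarrow> \<exists>h. bounded_solution r l' (K l') g h"
  shows "l \<in> resolvent_star X (comp_rot r)"
proof -
  obtain e where e: "e > 0" "ball l e \<subseteq> U"
    using U by (auto simp: open_contains_ball)
  have "isCont K l"
    using K U continuous_on_eq_continuous_at by blast
  then obtain d where d: "d > 0" "\<And>l'. dist l' l < d \<Longrightarrow> dist (K l') (K l) < 1"
    unfolding continuous_at_eps_delta by (meson zero_less_one)
  define \<delta> where "\<delta> = min d e"
  have in_U: "l' \<in> U" and K_le: "K l' \<le> K l + 1" if "l' \<in> ball l \<delta>" for l'
    using that e d(2)[of l'] by (auto simp: \<delta>_def dist_commute dist_real_def)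
  show ?thesis
  proof (rule resolvent_starI[where \<delta>=\<delta> and K="K l + 1"])
    show "\<delta> > 0"
      using d e by (simp add: \<delta>_def)
    show "inj_on (shift_op l' (comp_rot r)) X" if "l' \<in> ball l \<delta>" for l'
      using inj_on_shift_op_comp_rot[OF X r not_eigen[OF in_U[OF that]]] .
    show "shift_op l' (comp_rot r) ` X \<subseteq> X" for l'
      using shift_op_comp_rot_in[OF X r] by blast
  next
    fix l' g assume l': "l' \<in> ball l \<delta>" and g: "g \<in> X"
    have g_hol: "g \<in> hol_disc"
      using X g hol0_disc_subset by auto
    obtain h where "bounded_solution r l' (K l') g h"
      using solvable[OF in_U[OF l'] g_hol] by blast
    then have "bounded_solution r l' (K l + 1) g h"
      by (rule bounded_solution_mono[OF _ K_le[OF l'] g_hol])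
    then show "\<exists>h\<in>X. shift_op l' (comp_rot r) h = g \<and>
        (\<forall>\<rho>\<in>{0<..<1}. sup_on \<rho> h \<le> (K l + 1) * sup_on \<rho> g)"
      using bounded_solution_preimage[OF X g] by blast
  qed
qed

text \<open>The Neumann series for (I - \<mu> C_s)^-1 g.\<close>
definition neumann_series :: "complex \<Rightarrow> complex \<Rightarrow> (complex \<Rightarrow> complex) \<Rightarrow> complex \<Rightarrow> complex" where
  "neumann_series \<mu> s g = (\<lambda>z. if z \<in> ball 0 1 then \<Sum>k. \<mu> ^ k * g (s ^ k * z) else 0)"

lemma neumann_series_term_bound:
  assumes s: "norm s \<le> 1" and g: "g \<in> hol_disc" and \<rho>: "\<rho> < 1" and z: "z \<in> cball 0 \<rho>"
  shows "norm (\<mu> ^ k * g (s ^ k * z)) \<le> norm \<mu> ^ k * sup_on \<rho> g"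
proof -
  have "norm (s ^ k) \<le> 1"
    using s by (simp add: norm_power power_le_one)
  then have "norm (g (s ^ k * z)) \<le> sup_on \<rho> g"
    using sup_on_upper[OF g \<rho>] mult_in_cball z by blast
  then show ?thesis
    by (simp add: norm_mult norm_power mult_left_mono)
qed

lemma neumann_series_summable:
  assumes s: "norm s \<le> 1" and g: "g \<in> hol_disc" and \<mu>: "norm \<mu> < 1" and z: "z \<in> ball 0 1"
  shows "summable (\<lambda>k. norm (\<mu> ^ k * g (s ^ k * z)))"
proof (rule summable_comparison_test')
  show "summable (\<lambda>k. norm \<mu> ^ k * sup_on (norm z) g)"
    using \<mu> by (intro summable_mult2 summable_geometric) simp
  show "norm (norm (\<mu> ^ k * g (s ^ k * z))) \<le> norm \<mu> ^ k * sup_on (norm z) g" for k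
    using neumann_series_term_bound[OF s g, of "norm z" z] z by simp
qed

lemma neumann_series_bound:
  assumes s: "norm s \<le> 1" and g: "g \<in> hol_disc" and \<mu>: "norm \<mu> < 1"
    and \<rho>: "0 \<le> \<rho>" "\<rho> < 1" and z: "z \<in> cball 0 \<rho>"
  shows "norm (neumann_series \<mu> s g z) \<le> sup_on \<rho> g / (1 - norm \<mu>)"
proof -
  have zb: "z \<in> ball 0 1"
    using z \<rho> by simp
  have geom: "summable (\<lambda>k. norm \<mu> ^ k * sup_on \<rho> g)"
    using \<mu> by (intro summable_mult2 summable_geometric) simp
  have "norm (neumann_series \<mu> s g z) \<le> (\<Sum>k. norm (\<mu> ^ k * g (s ^ k * z)))"
    using zb summable_norm[OF neumann_series_summable[OF s g \<mu> zb]] by (simp add: neumann_series_def)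
  also have "\<dots> \<le> (\<Sum>k. norm \<mu> ^ k * sup_on \<rho> g)"
    using neumann_series_term_bound[OF s g \<rho>(2) z]
    by (intro suminf_le neumann_series_summable[OF s g \<mu> zb] geom)
  also have "\<dots> = sup_on \<rho> g / (1 - norm \<mu>)"
    using suminf_geometric[of "norm \<mu>"] \<mu> by (simp add: suminf_mult2[OF summable_geometric, symmetric])
  finally show ?thesis .
qed

lemma neumann_series_in_hol_disc:
  assumes s: "norm s \<le> 1" and g: "g \<in> hol_disc" and \<mu>: "norm \<mu> < 1"
  shows "neumann_series \<mu> s g \<in> hol_disc"
  unfolding neumann_series_def
proof (intro restrict_disc_in_hol_disc, rule holomorphic_uniform_sequence)
  show "(\<lambda>z. \<Sum>k<n. \<mu> ^ k * g (s ^ k * z)) holomorphic_on ball 0 1" for n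
    using s hol_discD(1)[OF g]
    by (intro holomorphic_intros holomorphic_on_rotate) (simp_all add: norm_power power_le_one)
  fix x :: complex assume x: "x \<in> ball 0 1"
  define \<rho> where "\<rho> = (1 + norm x) / 2"
  have \<rho>: "\<rho> < 1" "\<rho> - norm x > 0"
    using x by (simp_all add: \<rho>_def)
  have sub: "cball x (\<rho> - norm x) \<subseteq> cball 0 \<rho>"
  proof
    fix y assume "y \<in> cball x (\<rho> - norm x)"
    then show "y \<in> cball 0 \<rho>"
      using norm_triangle_ineq2[of y x] by (simp add: dist_norm norm_minus_commute)
  qed
  have "uniform_limit (cball x (\<rho> - norm x)) (\<lambda>n z. \<Sum>k<n. \<mu> ^ k * g (s ^ k * z))
      (\<lambda>z. \<Sum>k. \<mu> ^ k * g (s ^ k * z)) sequentially"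
  proof (rule Weierstrass_m_test)
    show "norm (\<mu> ^ k * g (s ^ k * z)) \<le> norm \<mu> ^ k * sup_on \<rho> g"
      if "z \<in> cball x (\<rho> - norm x)" for k z
      using neumann_series_term_bound[OF s g \<rho>(1)] sub that by blast
    show "summable (\<lambda>k. norm \<mu> ^ k * sup_on \<rho> g)"
      using \<mu> by (intro summable_mult2 summable_geometric) simp
  qed
  moreover have "cball x (\<rho> - norm x) \<subseteq> ball 0 1"
    using sub \<rho>(1) by fastforce
  ultimately show "\<exists>d>0. cball x d \<subseteq> ball 0 1 \<and> uniform_limit (cball x d)
      (\<lambda>n z. \<Sum>k<n. \<mu> ^ k * g (s ^ k * z)) (\<lambda>z. \<Sum>k. \<mu> ^ k * g (s ^ k * z)) sequentially"
    using \<rho>(2) by blast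
qed simp

lemma neumann_series_eq:
  assumes s: "norm s \<le> 1" and g: "g \<in> hol_disc" and \<mu>: "norm \<mu> < 1" and z: "z \<in> ball 0 1"
  shows "neumann_series \<mu> s g z = g z + \<mu> * neumann_series \<mu> s g (s * z)"
proof -
  have sz: "s * z \<in> ball 0 1"
    using mult_in_ball[OF s z] .
  note summable = summable_norm_cancel[OF neumann_series_summable[OF s g \<mu>]]
  have "(\<Sum>k. \<mu> ^ k * g (s ^ k * z)) = g z + (\<Sum>k. \<mu> ^ Suc k * g (s ^ Suc k * z))"
    using suminf_split_head[OF summable[OF z]] by simp
  also have "(\<Sum>k. \<mu> ^ Suc k * g (s ^ Suc k * z)) = \<mu> * (\<Sum>k. \<mu> ^ k * g (s ^ k * (s * z)))"
    using suminf_mult[OF summable[OF sz], of \<mu>] by (simp add: ac_simps)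
  finally show ?thesis
    using z sz by (simp add: neumann_series_def)
qed

lemma neumann_series_at_0: "g 0 = 0 \<Longrightarrow> neumann_series \<mu> s g 0 = 0"
  by (simp add: neumann_series_def)

text \<open>For |l| < 1, l I - C_r = - C_r (I - l C_s) with s = cnj r = r^-1.\<close>
lemma bounded_solution_inside_circle:
  assumes r: "norm r = 1" and l: "norm l < 1" and g: "g \<in> hol_disc"
  shows "\<exists>h. bounded_solution r l (1 / (1 - norm l)) g h"
proof -
  define N where "N = neumann_series l (cnj r) g"
  have cnj_r: "norm (cnj r) \<le> 1"
    using r by simp
  have cnj_r_r: "cnj r * (r * z) = z" for z
    using r complex_norm_square[of r] by (simp add: mult.assoc[symmetric] mult.commute[of "cnj r"])
  define h where "h = (\<lambda>z. - comp_rot (cnj r) N z)"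
  have N: "N \<in> hol_disc"
    unfolding N_def using neumann_series_in_hol_disc[OF cnj_r g l] .
  have "h \<in> hol_disc"
    using comp_rot_in_hol_disc[OF cnj_r N] by (auto simp: h_def hol_disc_def intro: holomorphic_intros)
  moreover have "l * h z - h (r * z) = g z" if z: "z \<in> ball 0 1" for z
    using z mult_in_ball[OF cnj_r z] mult_in_ball[of r, OF _ z] r
      neumann_series_eq[OF cnj_r g l z]
    by (simp add: h_def comp_rot_def N_def cnj_r_r)
  moreover have "norm (h z) \<le> 1 / (1 - norm l) * sup_on \<rho> g"
    if "\<rho> \<in> {0..<1}" "z \<in> cball 0 \<rho>" for \<rho> z
    using that neumann_series_bound[OF cnj_r g l, of \<rho> "cnj r * z"] mult_in_cball[OF cnj_r]
    by (simp add: h_def comp_rot_def N_def)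
  ultimately have "bounded_solution r l (1 / (1 - norm l)) g h"
    by (auto simp: bounded_solution_def h_def comp_rot_def N_def neumann_series_at_0)
  then show ?thesis
    by blast
qed

text \<open>For |l| > 1, l I - C_r = l (I - l^-1 C_r).\<close>
lemma bounded_solution_outside_circle:
  assumes r: "norm r \<le> 1" and l: "norm l > 1" and g: "g \<in> hol_disc"
  shows "\<exists>h. bounded_solution r l (1 / (norm l - 1)) g h"
proof -
  have l0: "l \<noteq> 0" and \<mu>: "norm (1 / l) < 1"
    using l by (auto simp: norm_divide divide_less_eq_1)
  define N where "N = neumann_series (1 / l) r g"
  define h where "h = (\<lambda>z. N z / l)"
  have "N \<in> hol_disc"
    unfolding N_def using neumann_series_in_hol_disc[OF r g \<mu>] .
  then have "h \<in> hol_disc"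
    by (auto simp: h_def hol_disc_def intro: holomorphic_intros)
  moreover have "l * h z - h (r * z) = g z" if z: "z \<in> ball 0 1" for z
    using neumann_series_eq[OF r g \<mu> z] l0 by (simp add: h_def N_def field_simps)
  moreover have "norm (h z) \<le> 1 / (norm l - 1) * sup_on \<rho> g"
    if \<rho>: "\<rho> \<in> {0..<1}" and z: "z \<in> cball 0 \<rho>" for \<rho> z
  proof -
    have "norm (h z) = norm (N z) / norm l"
      by (simp add: h_def norm_divide)
    also have "\<dots> \<le> sup_on \<rho> g / (1 - norm (1 / l)) / norm l"
      using neumann_series_bound[OF r g \<mu> _ _ z] \<rho> by (intro divide_right_mono) (simp_all add: N_def)
    also have "\<dots> = 1 / (norm l - 1) * sup_on \<rho> g"
      using l l0 by (simp add: norm_divide field_simps)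
    finally show ?thesis .
  qed
  ultimately have "bounded_solution r l (1 / (norm l - 1)) g h"
    by (auto simp: bounded_solution_def h_def N_def neumann_series_at_0)
  then show ?thesis
    by blast
qed

lemma resolvent_star_off_circle:
  assumes X: "X \<in> {hol_disc, hol0_disc}" and r: "norm r = 1" and l: "norm l \<noteq> 1"
  shows "l \<in> resolvent_star X (comp_rot r)"
proof (rule resolvent_star_comp_rotI[where U="{l. norm l \<noteq> 1}" and K="\<lambda>l. 1 / \<bar>norm l - 1\<bar>"])
  show "open {l :: complex. norm l \<noteq> 1}"
    by (intro open_Collect_neq continuous_intros)
  show "continuous_on {l. norm l \<noteq> 1} (\<lambda>l. 1 / \<bar>norm l - 1\<bar>)"
    by (intro continuous_intros) auto
  show "l' \<notin> {r ^ n | n. True}" if "l' \<in> {l. norm l \<noteq> 1}" for l'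
    using that r by (auto simp: norm_power)
  show "\<exists>h. bounded_solution r l' (1 / \<bar>norm l' - 1\<bar>) g h"
    if "l' \<in> {l. norm l \<noteq> 1}" and g: "g \<in> hol_disc" for l' g
  proof (cases "norm l' < 1")
    case True
    then show ?thesis
      using bounded_solution_inside_circle[OF r True g] by simp
  next
    case False
    then show ?thesis
      using that bounded_solution_outside_circle[OF _ _ g, of r l'] r by simp
  qed
qed (use X r l in auto)

lemma rotation_geometric_sum_telescope:
  fixes l r z :: "'a::comm_ring_1"
  assumes "r ^ m = 1"
  shows "l * (\<Sum>k<m. l ^ (m - 1 - k) * g (r ^ k * z)) - (\<Sum>k<m. l ^ (m - 1 - k) * g (r ^ k * (r * z)))
    = (l ^ m - 1) * g z"
proof -
  define a where "a k = l ^ (m - k) * g (r ^ k * z)" for k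
  have "l * (\<Sum>k<m. l ^ (m - 1 - k) * g (r ^ k * z)) = (\<Sum>k<m. a k)"
    unfolding sum_distrib_left a_def
  proof (intro sum.cong refl)
    fix k assume "k \<in> {..<m}"
    then have "l * l ^ (m - 1 - k) = l ^ (m - k)"
      by (metis Suc_diff_Suc diff_Suc_eq_diff_pred lessThan_iff power_Suc)
    then show "l * (l ^ (m - 1 - k) * g (r ^ k * z)) = l ^ (m - k) * g (r ^ k * z)"
      by (simp add: mult.assoc[symmetric])
  qed
  moreover have "(\<Sum>k<m. l ^ (m - 1 - k) * g (r ^ k * (r * z))) = (\<Sum>k<m. a (Suc k))"
    unfolding a_def by (intro sum.cong refl) (simp add: ac_simps)
  moreover have "(\<Sum>k<m. a k) - (\<Sum>k<m. a (Suc k)) = a 0 - a m"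
    using sum_lessThan_telescope'[of a m] by (simp add: sum_subtractf)
  ultimately show ?thesis
    using assms by (simp add: a_def algebra_simps)
qed

lemma rotation_geometric_sum_bound:
  assumes r: "norm r \<le> 1" and g: "g \<in> hol_disc" and \<rho>: "\<rho> < 1" and z: "z \<in> cball 0 \<rho>"
  shows "norm (\<Sum>k<m. l ^ (m - 1 - k) * g (r ^ k * z)) \<le> real m * (1 + norm l) ^ m * sup_on \<rho> g"
proof -
  have "norm (l ^ (m - 1 - k) * g (r ^ k * z)) \<le> (1 + norm l) ^ m * sup_on \<rho> g" for k
  proof -
    have "norm l ^ (m - 1 - k) \<le> (1 + norm l) ^ (m - 1 - k)"
      by (intro power_mono) auto
    also have "\<dots> \<le> (1 + norm l) ^ m"
      by (intro power_increasing) auto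
    finally have "norm l ^ (m - 1 - k) \<le> (1 + norm l) ^ m" .
    moreover have "norm (r ^ k) \<le> 1"
      using r by (simp add: norm_power power_le_one)
    then have "norm (g (r ^ k * z)) \<le> sup_on \<rho> g"
      using sup_on_upper[OF g \<rho> mult_in_cball[OF _ z]] by simp
    ultimately show ?thesis
      by (simp add: norm_mult norm_power mult_mono)
  qed
  then have "norm (\<Sum>k<m. l ^ (m - 1 - k) * g (r ^ k * z)) \<le> (\<Sum>k<m. (1 + norm l) ^ m * sup_on \<rho> g)"
    by (intro order_trans[OF norm_sum sum_mono])
  then show ?thesis
    by simp
qed

lemma bounded_solution_root_of_unity:
  assumes r: "norm r = 1" and rm: "r ^ m = 1" and lm: "l ^ m \<noteq> 1" and g: "g \<in> hol_disc"
  shows "\<exists>h. bounded_solution r l (real m * (1 + norm l) ^ m / norm (l ^ m - 1)) g h"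
proof -
  define h where
    "h = (\<lambda>z. if z \<in> ball 0 1 then (\<Sum>k<m. l ^ (m - 1 - k) * g (r ^ k * z)) / (l ^ m - 1) else 0)"
  have rk: "norm (r ^ k) \<le> 1" for k
    using r by (simp add: norm_power)
  have "h \<in> hol_disc"
    unfolding h_def using lm
    by (intro restrict_disc_in_hol_disc holomorphic_intros holomorphic_on_rotate[OF rk] hol_discD(1)[OF g]) auto
  moreover have "l * h z - h (r * z) = g z" if z: "z \<in> ball 0 1" for z
  proof -
    have "l * h z - h (r * z) = (l * (\<Sum>k<m. l ^ (m - 1 - k) * g (r ^ k * z))
        - (\<Sum>k<m. l ^ (m - 1 - k) * g (r ^ k * (r * z)))) / (l ^ m - 1)"
      using z mult_in_ball[of r, OF _ z] r by (simp add: h_def diff_divide_distrib ac_simps)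
    also have "\<dots> = g z"
      using rotation_geometric_sum_telescope[OF rm] lm by simp
    finally show ?thesis .
  qed
  moreover have "norm (h z) \<le> real m * (1 + norm l) ^ m / norm (l ^ m - 1) * sup_on \<rho> g"
    if \<rho>: "\<rho> \<in> {0..<1}" and z: "z \<in> cball 0 \<rho>" for \<rho> z
  proof -
    have "norm (h z) = norm (\<Sum>k<m. l ^ (m - 1 - k) * g (r ^ k * z)) / norm (l ^ m - 1)"
      using z \<rho> by (simp add: h_def norm_divide)
    also have "\<dots> \<le> real m * (1 + norm l) ^ m * sup_on \<rho> g / norm (l ^ m - 1)"
      using rotation_geometric_sum_bound[where r=r and l=l and m=m, OF _ g _ z] r \<rho>
      by (intro divide_right_mono) simp_all
    finally show ?thesis
      by simp
  qed
  ultimately have "bounded_solution r l (real m * (1 + norm l) ^ m / norm (l ^ m - 1)) g h"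
    by (auto simp: bounded_solution_def h_def)
  then show ?thesis
    by blast
qed

lemma resolvent_star_root_of_unity:
  assumes X: "X \<in> {hol_disc, hol0_disc}" and r: "norm r = 1" and rm: "r ^ m = 1" and l: "l ^ m \<noteq> 1"
  shows "l \<in> resolvent_star X (comp_rot r)"
proof (rule resolvent_star_comp_rotI
    [where U="{l. l ^ m \<noteq> 1}" and K="\<lambda>l. real m * (1 + norm l) ^ m / norm (l ^ m - 1)"])
  show "open {l :: complex. l ^ m \<noteq> 1}"
    by (intro open_Collect_neq continuous_intros)
  show "continuous_on {l. l ^ m \<noteq> 1} (\<lambda>l :: complex. real m * (1 + norm l) ^ m / norm (l ^ m - 1))"
    by (intro continuous_intros) auto
  show "l' \<notin> {r ^ n | n. True}" if "l' \<in> {l. l ^ m \<noteq> 1}" for l'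
  proof
    assume "l' \<in> {r ^ n | n. True}"
    then obtain n where "l' = r ^ n"
      by blast
    then have "l' ^ m = (r ^ m) ^ n"
      by (simp add: power_mult[symmetric] mult.commute)
    then show False
      using that rm by simp
  qed
qed (use X r l bounded_solution_root_of_unity[OF r rm] in auto)

lemma waelbroeck_spec_subset_sphere:
  assumes "X \<in> {hol_disc, hol0_disc}" and "norm r = 1"
  shows "waelbroeck_spec X (comp_rot r) \<subseteq> sphere 0 1"
proof
  fix l assume "l \<in> waelbroeck_spec X (comp_rot r)"
  then have "norm l = 1"
    using resolvent_star_off_circle[OF assms] unfolding waelbroeck_spec_def by blast
  then show "l \<in> sphere 0 1"
    by simp
qed

lemma waelbroeck_spec_subset_roots_of_unity:
  assumes "X \<in> {hol_disc, hol0_disc}" and "norm r = 1" and "r ^ m = 1"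
  shows "waelbroeck_spec X (comp_rot r) \<subseteq> {l. l ^ m = 1}"
  using resolvent_star_root_of_unity[OF assms] unfolding waelbroeck_spec_def by blast

section \<open>The spectra of C_r\<close>

lemma monomials_linearly_independent:
  fixes S :: "complex set" and e :: "nat \<Rightarrow> nat"
  assumes S: "open S" "S \<noteq> {}" and e: "inj_on e {..<n}"
    and zero: "\<forall>z\<in>S. (\<Sum>i<n. c i * z ^ e i) = 0" and k: "k < n"
  shows "c k = 0"
proof -
  define p where "p = (\<Sum>i<n. monom (c i) (e i))"
  have "p = 0"
  proof (rule ccontr)
    assume "p \<noteq> 0"
    then have "finite {z. poly p z = 0}"
      by (rule poly_roots_finite)
    moreover have "S \<subseteq> {z. poly p z = 0}"
      using zero by (auto simp: p_def poly_sum poly_monom)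
    ultimately have "finite S"
      by (rule finite_subset[rotated])
    then show False
      using S finite_imp_not_open by blast
  qed
  have "coeff p (e k) = (\<Sum>i<n. if i = k then c i else 0)"
    unfolding p_def coeff_sum coeff_monom
    using e k by (intro sum.cong refl) (auto dest: inj_onD)
  then show ?thesis
    using \<open>p = 0\<close> k by simp
qed

lemma infinite_dimensional_eigenspace:
  assumes X: "X \<in> {hol_disc, hol0_disc}" and r: "norm r \<le> 1" and m: "m > 0" and rm: "r ^ m = 1"
  shows "infinite_dimensional (kernel_of X (shift_op (r ^ j) (comp_rot r)))"
  unfolding infinite_dimensional_def
proof
  fix n
  \<comment> \<open>exponents congruent to j modulo m and positive, so the monomials also lie in H_0\<close>
  define e where "e i = j + Suc i * m" for i
  have "r ^ e i = r ^ j * (r ^ m) ^ Suc i" for i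
    by (simp add: e_def power_add power_mult[symmetric] mult.commute)
  then have eigen: "\<forall>z\<in>ball 0 1. disc_monomial (e i) (r * z) = r ^ j * disc_monomial (e i) z" for i
    using rm disc_monomial_rotate[OF r] by simp
  have "disc_monomial (e i) \<in> X" for i
    using X m disc_monomial_in_hol_disc disc_monomial_in_hol0_disc[of "e i"] by (auto simp: e_def)
  then have "disc_monomial (e i) \<in> kernel_of X (shift_op (r ^ j) (comp_rot r))" for i
    using eigen shift_op_comp_rot_eq_0_iff[OF disc_monomial_in_hol_disc] by (simp add: kernel_of_def)
  moreover have "c i = 0"
    if "(\<lambda>z. \<Sum>i<n. c i * disc_monomial (e i) z) = (\<lambda>z. 0)" and "i < n" for c i
  proof (rule monomials_linearly_independent[of "ball 0 1" e n])
    show "inj_on e {..<n}"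
      using m by (auto simp: e_def inj_on_def)
    show "\<forall>z\<in>ball 0 1. (\<Sum>i<n. c i * z ^ e i) = 0"
    proof
      fix z :: complex assume "z \<in> ball 0 1"
      then show "(\<Sum>i<n. c i * z ^ e i) = 0"
        using fun_cong[OF that(1), of z] by (simp add: disc_monomial_def)
    qed
  qed (use that in auto)
  ultimately show "\<exists>fs. (\<forall>i<n. fs i \<in> kernel_of X (shift_op (r ^ j) (comp_rot r))) \<and>
      (\<forall>c. (\<lambda>z. \<Sum>i<n. c i * fs i z) = (\<lambda>z. 0) \<longrightarrow> (\<forall>i<n. c i = 0))"
    by (intro exI[of _ "\<lambda>i. disc_monomial (e i)"]) blast
qed

lemma roots_of_unity_eq_powers:
  fixes r :: complex
  assumes m: "m > 0" and rm: "r ^ m = 1" and primitive: "\<forall>k. 0 < k \<and> k < m \<longrightarrow> r ^ k \<noteq> 1"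
  shows "{z. z ^ m = 1} = {r ^ j | j. j < m}"
proof -
  have r0: "r \<noteq> 0"
    using rm m by (auto simp: zero_power)
  have "r ^ i \<noteq> r ^ j" if "i < j" "j < m" for i j
  proof
    assume eq: "r ^ i = r ^ j"
    have "r ^ j = r ^ i * r ^ (j - i)"
      using that(1) by (simp flip: power_add)
    then have "r ^ i * r ^ (j - i) = r ^ i * 1"
      using eq by simp
    then have "r ^ (j - i) = 1"
      using r0 by simp
    then show False
      using primitive that by simp
  qed
  then have inj: "inj_on (\<lambda>j. r ^ j) {..<m}"
    by (intro inj_onI) (metis lessThan_iff linorder_neqE_nat)
  moreover have "{r ^ j | j. j < m} = (\<lambda>j. r ^ j) ` {..<m}"
    by auto
  ultimately have "card {r ^ j | j. j < m} = card {z :: complex. z ^ m = 1}"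
    using card_roots_unity_eq[OF m] card_image[OF inj] by simp
  moreover have "(r ^ j) ^ m = (r ^ m) ^ j" for j
    by (simp flip: power_mult add: mult.commute)
  then have "{r ^ j | j. j < m} \<subseteq> {z. z ^ m = 1}"
    using rm by auto
  ultimately show ?thesis
    using m by (intro card_subset_eq[symmetric] finite_roots_unity) auto
qed

lemma powers_of_root_of_unity:
  fixes r :: complex
  assumes m: "m > 0" and rm: "r ^ m = 1"
  shows "{r ^ n | n. True} = {r ^ j | j. j < m}" and "{r ^ n | n. n \<ge> 1} = {r ^ j | j. j < m}"
proof -
  have mod: "r ^ n = r ^ (n mod m)" for n
  proof -
    have "r ^ n = (r ^ m) ^ (n div m) * r ^ (n mod m)"
      unfolding power_mult[symmetric] power_add[symmetric] by simp
    then show ?thesis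
      using rm by simp
  qed
  have "r ^ n \<in> {r ^ j | j. j < m}" for n
    using mod[of n] m by auto
  moreover have "r ^ j \<in> {r ^ n | n. n \<ge> 1}" for j
    using mod[of j] mod[of "j + m"] m by (intro CollectI exI[of _ "j + m"]) simp
  ultimately show "{r ^ n | n. True} = {r ^ j | j. j < m}" "{r ^ n | n. n \<ge> 1} = {r ^ j | j. j < m}"
    by blast+
qed

lemma cis_Arg_of_norm_1:
  assumes "norm z = 1"
  shows "cis (Arg z) = z"
proof -
  have "z \<noteq> 0"
    using assms by auto
  then show ?thesis
    using cis_Arg[of z] assms by (simp add: sgn_div_norm)
qed

lemma powers_not_root_of_unity_cis:
  fixes r :: complex
  assumes r: "norm r = 1" and not_root: "\<forall>m::nat. m > 0 \<longrightarrow> r ^ m \<noteq> 1"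
  obtains \<theta> where "\<theta> \<notin> \<rat>" and "\<And>n. r ^ n = cis (2 * pi * (real n * \<theta>))"
proof
  define \<theta> where "\<theta> = Arg r / (2 * pi)"
  show r_pow: "r ^ n = cis (2 * pi * (real n * \<theta>))" for n
    using cis_Arg_of_norm_1[OF r] Complex.DeMoivre[of "Arg r" n] by (simp add: \<theta>_def)
  show "\<theta> \<notin> \<rat>"
  proof
    assume "\<theta> \<in> \<rat>"
    then obtain a b where ab: "b > 0" "\<theta> = of_int a / of_int b"
      by (auto elim: Rats_cases')
    then have "real (nat b) * \<theta> = of_int a"
      by simp
    then have "r ^ nat b = 1"
      using r_pow[of "nat b"] by simp
    then show False
      using not_root ab(1) by auto
  qed
qed

lemma sphere_subset_closure_powers:
  fixes r :: complex
  assumes r: "norm r = 1" and not_root: "\<forall>m::nat. m > 0 \<longrightarrow> r ^ m \<noteq> 1"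
  shows "sphere 0 1 \<subseteq> closure {r ^ n | n. n \<ge> 1}"
proof
  obtain \<theta> where \<theta>: "\<theta> \<notin> \<rat>" and r_pow: "\<And>n. r ^ n = cis (2 * pi * (real n * \<theta>))"
    using powers_not_root_of_unity_cis[OF r not_root] by blast
  fix w :: complex assume w: "w \<in> sphere 0 1"
  define \<alpha> where "\<alpha> = Arg w / (2 * pi)"
  have w_cis: "w = cis (2 * pi * \<alpha>)"
    using cis_Arg_of_norm_1[of w] w by (simp add: \<alpha>_def)
  show "w \<in> closure {r ^ n | n. n \<ge> 1}"
    unfolding closure_approachable
  proof (intro allI impI)
    fix e :: real assume "e > 0"
    have "continuous_on UNIV (\<lambda>t. cis (2 * pi * t))"
      by (intro continuous_intros)
    then have "isCont (\<lambda>t. cis (2 * pi * t)) \<alpha>"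
      by (simp add: continuous_on_eq_continuous_at)
    then obtain d where d: "d > 0"
      and close: "\<And>t. dist t \<alpha> < d \<Longrightarrow> dist (cis (2 * pi * t)) (cis (2 * pi * \<alpha>)) < e"
      using \<open>e > 0\<close> unfolding continuous_at_eps_delta by blast
    obtain h k where hk: "k > 0" "\<bar>of_int k * \<theta> - of_int h - \<alpha>\<bar> < d"
      using sequence_of_fractional_parts_is_dense[OF \<theta> d] by blast
    have "r ^ nat k = cis (2 * pi * (of_int k * \<theta> - of_int h)) * cis (2 * pi * of_int h)"
      using r_pow[of "nat k"] hk(1) by (simp add: cis_mult algebra_simps)
    also have "cis (2 * pi * of_int h) = 1"
      by (rule cis_multiple_2pi) simp
    finally have "dist (r ^ nat k) w < e"
      using close[of "of_int k * \<theta> - of_int h"] hk(2) w_cis by (simp add: dist_real_def)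
    moreover have "r ^ nat k \<in> {r ^ n | n. n \<ge> 1}"
      using hk(1) by (intro CollectI exI[of _ "nat k"]) simp
    ultimately show "\<exists>y\<in>{r ^ n | n. n \<ge> 1}. dist y w < e"
      by blast
  qed
qed

lemma spectra_root_of_unity:
  assumes X: "X \<in> {hol_disc, hol0_disc}" and r: "norm r = 1"
    and m: "m > 0" and rm: "r ^ m = 1" and primitive: "\<forall>k. 0 < k \<and> k < m \<longrightarrow> r ^ k \<noteq> 1"
  shows "point_spec X (comp_rot r) = {r ^ j | j. j < m}"
    and "spec X (comp_rot r) = {r ^ j | j. j < m}"
    and "waelbroeck_spec X (comp_rot r) = {r ^ j | j. j < m}"
proof -
  have r': "norm r \<le> 1"
    using r by simp
  show point: "point_spec X (comp_rot r) = {r ^ j | j. j < m}"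
    using X point_spec_hol_disc[OF r'] point_spec_hol0_disc[OF r'] powers_of_root_of_unity[OF m rm]
    by auto
  have "waelbroeck_spec X (comp_rot r) \<subseteq> {r ^ j | j. j < m}"
    using waelbroeck_spec_subset_roots_of_unity[OF X r rm] roots_of_unity_eq_powers[OF m rm primitive]
    by simp
  then show "spec X (comp_rot r) = {r ^ j | j. j < m}" "waelbroeck_spec X (comp_rot r) = {r ^ j | j. j < m}"
    using point point_spec_subset_spec[of X] spec_subset_waelbroeck_spec[of X] by blast+
qed

lemma spectra_not_root_of_unity:
  assumes X: "X \<in> {hol_disc, hol0_disc}" and r: "norm r = 1"
    and not_root: "\<forall>m::nat. m > 0 \<longrightarrow> r ^ m \<noteq> 1"
  shows "closure (spec X (comp_rot r)) = sphere 0 1" and "waelbroeck_spec X (comp_rot r) = sphere 0 1"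
proof -
  have r': "norm r \<le> 1"
    using r by simp
  have "{r ^ n | n. n \<ge> 1} \<subseteq> spec X (comp_rot r)"
    using X point_spec_hol_disc[OF r'] point_spec_hol0_disc[OF r'] point_spec_subset_spec[of X]
    by auto
  then have "sphere 0 1 \<subseteq> closure (spec X (comp_rot r))"
    using sphere_subset_closure_powers[OF r not_root] closure_mono by blast
  then show "closure (spec X (comp_rot r)) = sphere 0 1" "waelbroeck_spec X (comp_rot r) = sphere 0 1"
    using closure_spec_subset_waelbroeck_spec[of X] waelbroeck_spec_subset_sphere[OF X r] by blast+
qed

theorem mainTheorem1:
  fixes r :: complex
  assumes "norm r = 1"
  shows
   "point_spec hol_disc (comp_rot r) = {r ^ n | n. True} \<and>
    waelbroeck_spec hol_disc (comp_rot r) \<subseteq> sphere 0 1 \<and>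
    waelbroeck_spec hol0_disc (comp_rot r) \<subseteq> sphere 0 1 \<and>
    (\<forall>m::nat. m > 0 \<and> r ^ m = 1 \<and> (\<forall>k. 0 < k \<and> k < m \<longrightarrow> r ^ k \<noteq> 1) \<longrightarrow>
      spec hol_disc (comp_rot r) = {r ^ j | j. j < m} \<and>
      waelbroeck_spec hol_disc (comp_rot r) = {r ^ j | j. j < m} \<and>
      point_spec hol_disc (comp_rot r) = {r ^ j | j. j < m} \<and>
      (\<forall>j<m. infinite_dimensional (kernel_of hol_disc (shift_op (r ^ j) (comp_rot r)))) \<and>
      spec hol0_disc (comp_rot r) = {r ^ j | j. j < m} \<and>
      waelbroeck_spec hol0_disc (comp_rot r) = {r ^ j | j. j < m} \<and>
      point_spec hol0_disc (comp_rot r) = {r ^ j | j. j < m} \<and>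
      (\<forall>j<m. infinite_dimensional (kernel_of hol0_disc (shift_op (r ^ j) (comp_rot r))))) \<and>
    ((\<forall>m::nat. m > 0 \<longrightarrow> r ^ m \<noteq> 1) \<longrightarrow>
      point_spec hol0_disc (comp_rot r) = {r ^ n | n. n \<ge> 1} \<and>
      closure (spec hol0_disc (comp_rot r)) = sphere 0 1 \<and>
      waelbroeck_spec hol0_disc (comp_rot r) = sphere 0 1 \<and>
      waelbroeck_spec hol_disc (comp_rot r) = sphere 0 1)"
proof -
  have X: "hol_disc \<in> {hol_disc, hol0_disc}" "hol0_disc \<in> {hol_disc, hol0_disc}"
    by simp_all
  have r: "norm r \<le> 1"
    using assms by simp
  have root_of_unity: "spec X (comp_rot r) = {r ^ j | j. j < m} \<and>
      waelbroeck_spec X (comp_rot r) = {r ^ j | j. j < m} \<and>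
      point_spec X (comp_rot r) = {r ^ j | j. j < m} \<and>
      (\<forall>j<m. infinite_dimensional (kernel_of X (shift_op (r ^ j) (comp_rot r))))"
    if "X \<in> {hol_disc, hol0_disc}" "m > 0" "r ^ m = 1" "\<forall>k. 0 < k \<and> k < m \<longrightarrow> r ^ k \<noteq> 1" for X m
    using spectra_root_of_unity[OF that(1) assms that(2-4)]
      infinite_dimensional_eigenspace[OF that(1) r that(2,3)] by simp
  have not_root_of_unity:
    "closure (spec X (comp_rot r)) = sphere 0 1 \<and> waelbroeck_spec X (comp_rot r) = sphere 0 1"
    if "X \<in> {hol_disc, hol0_disc}" and "\<forall>m::nat. m > 0 \<longrightarrow> r ^ m \<noteq> 1" for X
    using spectra_not_root_of_unity[OF that(1) assms] that(2) by simp
  show ?thesis (is "?point \<and> ?W \<and> ?W' \<and> ?root \<and> ?not_root")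
  proof (intro conjI)
    show ?point
      by (rule point_spec_hol_disc[OF r])
    show ?W ?W'
      by (rule waelbroeck_spec_subset_sphere[OF X(1) assms] waelbroeck_spec_subset_sphere[OF X(2) assms])+
    show ?root
      using root_of_unity[OF X(1)] root_of_unity[OF X(2)] by meson
    show ?not_root
      using not_root_of_unity[OF X(1)] not_root_of_unity[OF X(2)] point_spec_hol0_disc[OF r] by meson
  qed
qed

end
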